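(* Let $S$ be a submonoid of $\mathbb N^d$ and $\mathbf b\in S\setminus\{0\}$. Then $\mathrm{PF}(S)\neq\varnothing$ if and only if $\mathrm{maximals}_{\preceq_S}\mathrm{Ap}(S,\mathbf b)\neq\varnothing$. In this case $\mathrm{PF}(S)=\{\mathbf a-\mathbf b:\mathbf a\in\mathrm{maximals}_{\preceq_S}\mathrm{Ap}(S,\mathbf b)\}$.
   Context: $\mathrm{pos}(S)$ is the set of finite nonnegative rational linear combinations of elements of $S$; $\mathcal H(S)=(\mathrm{pos}(S)\setminus S)\cap\mathbb N^d$; $\mathrm{PF}(S)=\{\mathbf a\in\mathcal H(S):\mathbf a+(S\setminus\{0\})\subseteq S\}$. For $\mathbf b\in S\setminus\{0\}$, $\mathrm{Ap}(S,\mathbf b)=\{\mathbf a\in S:\mathbf a-\mathbf b\in\mathrm{pos}(S)\setminus S\}$. The partial order $\preceq_S$ on $\mathbb N^d$ is given by $\mathbf x\preceq_S\mathbf y$ iff $\mathbf y-\mathbf x\in S$, and $\mathrm{maximals}_{\preceq_S}X$ is the set of maximal elements of $X$ for this order. *)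

theory Defs
  imports Complex_Main "HOL-Library.Function_Algebras"
begin

text \<open>Elements of N^d are functions 'd \<Rightarrow> nat for a finite index type 'd
  (d = CARD('d)); Q^d is 'd \<Rightarrow> rat. Addition/subtraction are pointwise.\<close>

definition emb :: "('d \<Rightarrow> nat) \<Rightarrow> ('d \<Rightarrow> rat)" where
  "emb a = (\<lambda>i. of_nat (a i))"

definition submonoid :: "('d \<Rightarrow> nat) set \<Rightarrow> bool" where
  "submonoid S \<longleftrightarrow> 0 \<in> S \<and> (\<forall>x\<in>S. \<forall>y\<in>S. x + y \<in> S)"

definition pos :: "('d \<Rightarrow> nat) set \<Rightarrow> ('d \<Rightarrow> rat) set" where
  "pos S = {v. \<exists>F c. finite F \<and> F \<subseteq> S \<and> (\<forall>s\<in>F. c s \<ge> (0::rat)) \<and>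
                   v = (\<lambda>i. \<Sum>s\<in>F. c s * of_nat (s i))}"

definition holes :: "('d \<Rightarrow> nat) set \<Rightarrow> ('d \<Rightarrow> nat) set" where
  "holes S = {a. emb a \<in> pos S \<and> a \<notin> S}"

definition PF :: "('d \<Rightarrow> nat) set \<Rightarrow> ('d \<Rightarrow> nat) set" where
  "PF S = {a \<in> holes S. \<forall>s \<in> S - {0}. a + s \<in> S}"

definition Ap :: "('d \<Rightarrow> nat) set \<Rightarrow> ('d \<Rightarrow> nat) \<Rightarrow> ('d \<Rightarrow> nat) set" where
  "Ap S b = {a \<in> S. emb a - emb b \<in> pos S - emb ` S}"

definition preceq_S :: "('d \<Rightarrow> nat) set \<Rightarrow> ('d \<Rightarrow> nat) \<Rightarrow> ('d \<Rightarrow> nat) \<Rightarrow> bool" where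
  "preceq_S S x y \<longleftrightarrow> (\<exists>s\<in>S. y = x + s)"

definition maximals :: "('d \<Rightarrow> nat) set \<Rightarrow> ('d \<Rightarrow> nat) set \<Rightarrow> ('d \<Rightarrow> nat) set" where
  "maximals S X = {x \<in> X. \<forall>y \<in> X. preceq_S S x y \<longrightarrow> y = x}"

end

theory Submission
  imports Defs
begin

text \<open>Adding \<open>b\<close> maps a pseudo-Frobenius element \<open>h\<close> into the Apery set, and maximally so:
  anything above \<open>h + b\<close> in \<open>\<preceq>\<^sub>S\<close> has the form \<open>h + s + b\<close> with \<open>h + s \<in> S\<close>, so it leaves
  the Apery set. Conversely, if \<open>a\<close> is maximal in the Apery set and \<open>s \<in> S - {0}\<close>, then
  \<open>a - b + s\<close> still lies in the cone; were it a hole, \<open>a + s\<close> would be an element of the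
  Apery set strictly above \<open>a\<close>.\<close>

lemma emb_add: "emb (x + y) = emb x + emb y"
  by (simp add: emb_def fun_eq_iff)

lemma emb_diff: "(\<And>i. y i \<le> x i) \<Longrightarrow> emb x - emb y = emb (x - y)"
  by (simp add: emb_def fun_eq_iff of_nat_diff)

lemma inj_emb: "inj emb"
  by (auto intro!: injI simp: emb_def fun_eq_iff)

lemma emb_in_pos: "x \<in> S \<Longrightarrow> emb x \<in> pos S"
  unfolding pos_def emb_def
  by (intro CollectI exI[of _ "{x}"] exI[of _ "\<lambda>_. 1"]) auto

lemma pos_nonneg: "v \<in> pos S \<Longrightarrow> v i \<ge> 0"
  unfolding pos_def by (auto intro!: sum_nonneg)

lemma pos_add:
  assumes "u \<in> pos S" "v \<in> pos S"
  shows "u + v \<in> pos S"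
proof -
  obtain F c where F: "finite F" "F \<subseteq> S" "\<forall>s\<in>F. c s \<ge> (0::rat)"
    and u: "u = (\<lambda>i. \<Sum>s\<in>F. c s * of_nat (s i))"
    using assms(1) unfolding pos_def by blast
  obtain G d where G: "finite G" "G \<subseteq> S" "\<forall>s\<in>G. d s \<ge> (0::rat)"
    and v: "v = (\<lambda>i. \<Sum>s\<in>G. d s * of_nat (s i))"
    using assms(2) unfolding pos_def by blast
  define c' where "c' s = (if s \<in> F then c s else 0)" for s
  define d' where "d' s = (if s \<in> G then d s else 0)" for s
  have "(\<Sum>s\<in>F. c s * of_nat (s i)) = (\<Sum>s\<in>F \<union> G. c' s * of_nat (s i))" for i
    by (rule sum.mono_neutral_cong_left) (use F G in \<open>auto simp: c'_def\<close>)
  moreover have "(\<Sum>s\<in>G. d s * of_nat (s i)) = (\<Sum>s\<in>F \<union> G. d' s * of_nat (s i))" for i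
    by (rule sum.mono_neutral_cong_left) (use F G in \<open>auto simp: d'_def\<close>)
  ultimately have "u + v = (\<lambda>i. \<Sum>s\<in>F \<union> G. (c' s + d' s) * of_nat (s i))"
    by (simp add: u v fun_eq_iff distrib_right sum.distrib)
  moreover have "\<forall>s\<in>F \<union> G. c' s + d' s \<ge> 0"
    using F G by (auto simp: c'_def d'_def)
  ultimately show ?thesis
    using F(1,2) G(1,2) unfolding pos_def
    by (intro CollectI exI[of _ "F \<union> G"] exI[of _ "\<lambda>s. c' s + d' s"]) simp
qed

lemma Ap_iff: "a \<in> Ap S b \<longleftrightarrow> a \<in> S \<and> (\<forall>i. b i \<le> a i) \<and> a - b \<in> holes S"
proof
  assume a: "a \<in> Ap S b"
  then have "emb a - emb b \<in> pos S" by (simp add: Ap_def)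
  then have le: "\<forall>i. b i \<le> a i"
    by (auto simp: emb_def dest: pos_nonneg)
  with a show "a \<in> S \<and> (\<forall>i. b i \<le> a i) \<and> a - b \<in> holes S"
    by (auto simp: Ap_def holes_def emb_diff)
next
  assume "a \<in> S \<and> (\<forall>i. b i \<le> a i) \<and> a - b \<in> holes S"
  then show "a \<in> Ap S b"
    by (auto simp: Ap_def holes_def emb_diff inj_eq[OF inj_emb])
qed

lemma add_in_maximals_Ap_if_PF:
  assumes h: "h \<in> PF S" and "b \<in> S" "b \<noteq> 0"
  shows "h + b \<in> maximals S (Ap S b)"
proof -
  have hole: "h \<in> holes S" and shift: "\<And>s. s \<in> S - {0} \<Longrightarrow> h + s \<in> S"
    using h by (auto simp: PF_def)
  have Ap: "h + b \<in> Ap S b"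
    using hole shift assms(2,3) by (simp add: Ap_iff)
  have "y = h + b" if y: "y \<in> Ap S b" and s: "s \<in> S" "y = h + b + s" for y s
  proof (rule ccontr)
    assume "y \<noteq> h + b"
    then have "h + s \<in> S" using shift s by auto
    moreover have "y - b = h + s" using s by (auto simp: fun_eq_iff)
    ultimately show False using y by (auto simp: Ap_iff holes_def)
  qed
  with Ap show ?thesis
    by (auto simp: maximals_def preceq_S_def)
qed

lemma diff_in_PF_if_maximals_Ap:
  assumes "submonoid S" and a: "a \<in> maximals S (Ap S b)"
  shows "a - b \<in> PF S"
proof -
  have aS: "a \<in> S" and le: "\<forall>i. b i \<le> a i" and hole: "a - b \<in> holes S"
    using a by (auto simp: maximals_def Ap_iff)
  have "a - b + s \<in> S" if s: "s \<in> S" "s \<noteq> 0" for s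
  proof (rule ccontr)
    assume "a - b + s \<notin> S"
    moreover have "emb (a - b + s) \<in> pos S"
      using hole s by (auto simp: holes_def emb_add intro: pos_add emb_in_pos)
    moreover have "a + s - b = a - b + s"
      using le by (simp add: fun_eq_iff)
    ultimately have "a + s - b \<in> holes S"
      by (simp add: holes_def)
    moreover have "a + s \<in> S"
      using assms(1) aS s by (simp add: submonoid_def)
    ultimately have "a + s \<in> Ap S b"
      using le by (auto simp: Ap_iff add_increasing2)
    then have "a + s = a"
      using a s by (auto simp: maximals_def preceq_S_def)
    with s show False by simp
  qed
  with hole show ?thesis by (auto simp: PF_def)
qed

lemma PF_eq_maximals_Ap_shift:
  assumes "submonoid S" "b \<in> S" "b \<noteq> 0"
  shows "PF S = (\<lambda>a. a - b) ` maximals S (Ap S b)"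
proof
  show "PF S \<subseteq> (\<lambda>a. a - b) ` maximals S (Ap S b)"
  proof
    fix h assume "h \<in> PF S"
    then have "h + b \<in> maximals S (Ap S b)"
      using assms(2,3) by (rule add_in_maximals_Ap_if_PF)
    moreover have "h = h + b - b" by (simp add: fun_eq_iff)
    ultimately show "h \<in> (\<lambda>a. a - b) ` maximals S (Ap S b)" by blast
  qed
  show "(\<lambda>a. a - b) ` maximals S (Ap S b) \<subseteq> PF S"
    using diff_in_PF_if_maximals_Ap[OF assms(1)] by blast
qed

theorem proposition3p7:
  fixes S :: "('d::finite \<Rightarrow> nat) set" and b :: "'d \<Rightarrow> nat"
  assumes "submonoid S" and "b \<in> S" and "b \<noteq> 0"
  shows "(PF S \<noteq> {} \<longleftrightarrow> maximals S (Ap S b) \<noteq> {}) \<and>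
         (PF S \<noteq> {} \<longrightarrow> PF S = (\<lambda>a. a - b) ` maximals S (Ap S b))"
  using PF_eq_maximals_Ap_shift[OF assms] by simp

end
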